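(* Let $G$ be connected with weights $w:E\to\mathbb{R}_{>0}$, let $\pi$ be a vertex order and let $m_P$ be the perfect metric on $G_\pi^*$. Let $R$ be the set of edges $\{x,y\}$ of $G_\pi^*$, where $x$ denotes the lower-ranked endpoint, for which there exists a vertex $z\neq y$ of rank larger than the rank of $x$, adjacent to both $x$ and $y$ in $G_\pi^*$, with $m_P(\{x,y\})=m_P(\{x,z\})+m_P(\{z,y\})$. Then (i) for all $s,t\in V$ there is an up-down $s$–$t$ path in $G_\pi^*$ that uses no edge of $R$ and whose $m_P$-length equals $\mathrm{dist}_I(s,t)$; and (ii) for every edge $\{x,y\}\notin R$ of $G_\pi^*$, the one-edge path $x,y$ is the only up-down $x$–$y$ path in $G_\pi^*$ whose $m_P$-length equals $\mathrm{dist}_I(x,y)$.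
   Context: Let $G=(V,E)$ be a finite simple undirected graph with $n=|V|$ vertices. A vertex order is a bijection $\pi:\{1,\dots,n\}\to V$; the rank of $v$ is $\pi^{-1}(v)$. Contracting a vertex $v$ in a graph means deleting $v$ and its incident edges and adding an edge between every pair of former neighbors of $v$ that are not already adjacent. The core graph $G_{\pi,i}$ is obtained from $G$ by contracting $\pi(1),\dots,\pi(i-1)$ in this order. $G_\pi^*$ is the graph on $V$ whose edge set is the union of the edge sets of all $G_{\pi,i}$, $i=1,\dots,n$ (i.e. $G$ together with all edges inserted during the contractions). Let $w:E\to\mathbb{R}_{>0}$ and let $\mathrm{dist}_I(s,t)$ be the shortest $s$–$t$ path length in $(G,w)$. A metric is a map $m$ assigning to every edge of $G_\pi^*$ a value in $\mathbb{R}_{>0}\cup\{\infty\}$; the $m$-length of a path in $G_\pi^*$ is the sum of $m$ over its edges. An up-down path is a path $v_0,\dots,v_k$ in $G_\pi^*$ for which there is $j$ with the ranks strictly increasing along $v_0,\dots,v_j$ and strictly decreasing along $v_j,\dots,v_k$. The perfect metric is $m_P(\{x,y\})=\mathrm{dist}_I(x,y)$ for every edge $\{x,y\}$ of $G_\pi^*$. *)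

theory Defs
  imports Complex_Main
begin

definition simple_graph :: "'a set \<Rightarrow> 'a set set \<Rightarrow> bool" where
  "simple_graph V E \<longleftrightarrow> finite V \<and> (\<forall>e\<in>E. \<exists>x y. x \<in> V \<and> y \<in> V \<and> x \<noteq> y \<and> e = {x, y})"

definition gpath :: "'a set set \<Rightarrow> 'a list \<Rightarrow> bool" where
  "gpath F p \<longleftrightarrow> p \<noteq> [] \<and> distinct p \<and> (\<forall>i. i + 1 < length p \<longrightarrow> {p ! i, p ! (i + 1)} \<in> F)"

definition connected_graph :: "'a set \<Rightarrow> 'a set set \<Rightarrow> bool" where
  "connected_graph V E \<longleftrightarrow> (\<forall>s\<in>V. \<forall>t\<in>V. \<exists>p. gpath E p \<and> hd p = s \<and> last p = t)"

definition plen :: "('a set \<Rightarrow> real) \<Rightarrow> 'a list \<Rightarrow> real" where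
  "plen m p = (\<Sum>i<length p - 1. m {p ! i, p ! (i + 1)})"

definition distI :: "'a set set \<Rightarrow> ('a set \<Rightarrow> real) \<Rightarrow> 'a \<Rightarrow> 'a \<Rightarrow> real" where
  "distI E w s t = Min {plen w p | p. gpath E p \<and> hd p = s \<and> last p = t}"

definition contract :: "'a \<Rightarrow> 'a set set \<Rightarrow> 'a set set" where
  "contract v F = {e \<in> F. v \<notin> e} \<union> {{x, y} | x y. x \<noteq> y \<and> {x, v} \<in> F \<and> {y, v} \<in> F}"

(* core k = edge set of G_{pi,k+1}, i.e. after contracting pi 1, ..., pi k *)
fun core :: "'a set set \<Rightarrow> (nat \<Rightarrow> 'a) \<Rightarrow> nat \<Rightarrow> 'a set set" where
  "core E \<pi> 0 = E"
| "core E \<pi> (Suc k) = contract (\<pi> (Suc k)) (core E \<pi> k)"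

definition Estar :: "'a set \<Rightarrow> 'a set set \<Rightarrow> (nat \<Rightarrow> 'a) \<Rightarrow> 'a set set" where
  "Estar V E \<pi> = (\<Union>k<card V. core E \<pi> k)"

definition rank :: "'a set \<Rightarrow> (nat \<Rightarrow> 'a) \<Rightarrow> 'a \<Rightarrow> nat" where
  "rank V \<pi> v = inv_into {1..card V} \<pi> v"

definition mP :: "'a set set \<Rightarrow> ('a set \<Rightarrow> real) \<Rightarrow> 'a set \<Rightarrow> real" where
  "mP E w e = (SOME d. \<exists>x y. e = {x, y} \<and> d = distI E w x y)"

definition updown :: "('a \<Rightarrow> nat) \<Rightarrow> 'a list \<Rightarrow> bool" where
  "updown r p \<longleftrightarrow> (\<exists>j<length p.
     (\<forall>i. i < j \<longrightarrow> r (p ! i) < r (p ! (i + 1))) \<and>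
     (\<forall>i. j \<le> i \<and> i + 1 < length p \<longrightarrow> r (p ! i) > r (p ! (i + 1))))"

definition Rset :: "'a set \<Rightarrow> 'a set set \<Rightarrow> ('a set \<Rightarrow> real) \<Rightarrow> (nat \<Rightarrow> 'a) \<Rightarrow> 'a set set" where
  "Rset V E w \<pi> = {{x, y} | x y. {x, y} \<in> Estar V E \<pi> \<and> rank V \<pi> x < rank V \<pi> y \<and>
     (\<exists>z. z \<noteq> y \<and> rank V \<pi> z > rank V \<pi> x \<and> {x, z} \<in> Estar V E \<pi> \<and> {z, y} \<in> Estar V E \<pi> \<and>
          mP E w {x, y} = mP E w {x, z} + mP E w {z, y})}"

end

theory Submission
  imports Defs
begin

(*
  The two key facts are that
     the higher-ranked neighbours of a vertex in G* form a clique, and that on a walk whose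
     perfect-metric length is the distance of its ends, the distance between two of its
     vertices is the length of the walk between them.
  3. The theorem.  A shortest path of G* with fewest vertices has no valley (a valley can be
     cut off along a clique edge), so shortest up-down paths exist.  Part (ii): if a shortest
     up-down path for an edge {x, y} is not the edge itself, its second vertex witnesses that
     {x, y} is bypassed.  Part (i): among the shortest up-down s-t paths take one maximising
     the rank weight, the sum of 2^rank over its vertices; a bypassed ascending edge {x, y}
     with witness z would allow a detour through z that is again a shortest up-down path
     but of larger weight.
*)

definition walk :: "'a set set \<Rightarrow> 'a list \<Rightarrow> bool" where
  "walk F = successively (\<lambda>a b. {a, b} \<in> F)"

lemma gpath_iff_walk: "gpath F p \<longleftrightarrow> p \<noteq> [] \<and> distinct p \<and> walk F p"
  by (simp add: gpath_def walk_def successively_conv_nth)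

lemma walk_Nil [simp]: "walk F []"
  and walk_single [simp]: "walk F [a]"
  and walk_Cons2 [simp]: "walk F (a # b # r) \<longleftrightarrow> {a, b} \<in> F \<and> walk F (b # r)"
  by (simp_all add: walk_def)

lemma walk_append_iff:
  "walk F (xs @ ys) \<longleftrightarrow> walk F xs \<and> walk F ys \<and> (xs = [] \<or> ys = [] \<or> {last xs, hd ys} \<in> F)"
  by (simp add: walk_def successively_append_iff)

lemma successively_take: "successively P xs \<Longrightarrow> successively P (take k xs)"
  and successively_drop: "successively P xs \<Longrightarrow> successively P (drop k xs)"
  by (metis append_take_drop_id successively_append_iff)+

lemma walk_take: "walk F p \<Longrightarrow> walk F (take k p)"
  and walk_drop: "walk F p \<Longrightarrow> walk F (drop k p)"
  by (simp_all add: walk_def successively_take successively_drop)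

lemma walk_rev [simp]: "walk F (rev p) \<longleftrightarrow> walk F p"
  by (simp add: walk_def insert_commute)

lemma walk_mono: "walk F p \<Longrightarrow> F \<subseteq> G \<Longrightarrow> walk G p"
  unfolding walk_def by (erule successively_mono) auto

lemma gpath_rev: "gpath F p \<Longrightarrow> gpath F (rev p)"
  by (simp add: gpath_iff_walk)

lemma plen_Nil [simp]: "plen m [] = 0"
  and plen_single [simp]: "plen m [a] = 0"
  by (simp_all add: plen_def)

lemma plen_Cons2 [simp]: "plen m (a # b # r) = m {a, b} + plen m (b # r)"
  unfolding plen_def by (simp del: sum.lessThan_Suc add: sum.lessThan_Suc_shift)

lemma plen_append:
  "xs \<noteq> [] \<Longrightarrow> ys \<noteq> [] \<Longrightarrow> plen m (xs @ ys) = plen m xs + m {last xs, hd ys} + plen m ys"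
proof (induction xs rule: induct_list012)
  case (3 a b r)
  then show ?case by simp
qed (auto simp: neq_Nil_conv)

lemma plen_rev: "plen m (rev p) = plen m p"
proof (induction p rule: induct_list012)
  case (3 a b r)
  have "plen m (rev (a # b # r)) = plen m (rev (b # r) @ [a])" by simp
  also have "\<dots> = plen m (rev (b # r)) + m {b, a}"
    by (subst plen_append) (simp_all add: last_rev)
  finally show ?case using 3 by (simp add: insert_commute)
qed simp_all

text \<open>Splitting a walk at position \<open>k\<close>; the vertex \<open>p ! k\<close> belongs to both parts.\<close>
lemma plen_take_drop:
  assumes "k < length p"
  shows "plen m p = plen m (take (Suc k) p) + plen m (drop k p)"
proof -
  have drop_k: "drop k p = p ! k # drop (Suc k) p"
    using assms by (simp add: Cons_nth_drop_Suc)
  show ?thesis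
  proof (cases "Suc k < length p")
    case True
    have parts: "take (Suc k) p \<noteq> []" "drop (Suc k) p \<noteq> []" using True by auto
    have last_take: "last (take (Suc k) p) = p ! k" using assms by (simp add: take_Suc_conv_app_nth)
    have "plen m p = plen m (take (Suc k) p) + m {p ! k, p ! Suc k} + plen m (drop (Suc k) p)"
      using plen_append [OF parts, of m] True last_take
      by (simp add: hd_drop_conv_nth)
    moreover have "drop (Suc k) p = p ! Suc k # drop (Suc (Suc k)) p"
      using True by (simp add: Cons_nth_drop_Suc)
    ultimately show ?thesis using drop_k by simp
  next
    case False
    then show ?thesis using drop_k by simp
  qed
qed

lemma plen_nonneg: "walk F p \<Longrightarrow> \<forall>e\<in>F. m e \<ge> 0 \<Longrightarrow> plen m p \<ge> 0"
  unfolding plen_def walk_def successively_conv_nth by (auto intro: sum_nonneg)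

lemma walk_to_path:
  assumes "walk F p" "p \<noteq> []" "\<forall>e\<in>F. m e \<ge> 0"
  shows "\<exists>q. gpath F q \<and> hd q = hd p \<and> last q = last p \<and> plen m q \<le> plen m p"
  using assms(1,2)
proof (induction p rule: induct_list012)
  case (2 a)
  then show ?case by (intro exI [of _ "[a]"]) (simp add: gpath_def)
next
  case (3 a b r)
  then obtain q where q: "gpath F q" "hd q = b" "last q = last (b # r)" "plen m q \<le> plen m (b # r)"
    by auto
  then obtain r' where q_eq: "q = b # r'" by (cases q) (auto simp: gpath_def)
  have ab: "{a, b} \<in> F" using "3.prems" by simp
  show ?case
  proof (cases "a \<in> set q")
    case False
    then show ?thesis
      using q q_eq ab by (intro exI [of _ "a # q"]) (auto simp: gpath_iff_walk)
  next
    case True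
    then obtain xs ys where split: "q = xs @ a # ys" by (meson split_list)
    have walk_q: "walk F q" using q by (simp add: gpath_iff_walk)
    have "gpath F (a # ys)"
      using q split by (auto simp: gpath_iff_walk walk_append_iff)
    moreover have "plen m (a # ys) \<le> plen m q"
    proof (cases "xs = []")
      case False
      have "plen m xs \<ge> 0" "m {last xs, a} \<ge> 0"
        using walk_q split False assms(3) plen_nonneg by (auto simp: walk_append_iff)
      then show ?thesis using split False plen_append [of xs "a # ys" m] by simp
    qed (simp add: split)
    moreover have "m {a, b} \<ge> 0" using ab assms(3) by auto
    ultimately show ?thesis
      using q split by (intro exI [of _ "a # ys"]) auto
  qed
qed simp

section \<open>Up-down sequences\<close>

abbreviation ascending :: "('a \<Rightarrow> nat) \<Rightarrow> 'a list \<Rightarrow> bool" where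
  "ascending r \<equiv> successively (\<lambda>a b. r a < r b)"

abbreviation descending :: "('a \<Rightarrow> nat) \<Rightarrow> 'a list \<Rightarrow> bool" where
  "descending r \<equiv> successively (\<lambda>a b. r a > r b)"

lemma updown_iff_peak:
  "updown r p \<longleftrightarrow> (\<exists>j<length p. ascending r (take (Suc j) p) \<and> descending r (drop j p))"
proof -
  have "ascending r (take (Suc j) p) \<longleftrightarrow> (\<forall>i<j. r (p ! i) < r (p ! (i + 1)))"
    if "j < length p" for j
    using that by (auto simp: successively_conv_nth)
  moreover have "descending r (drop j p) \<longleftrightarrow>
      (\<forall>i. j \<le> i \<and> i + 1 < length p \<longrightarrow> r (p ! i) > r (p ! (i + 1)))" for j
    unfolding successively_conv_nth
  proof (intro iffI allI impI)
    fix i assume "\<forall>i. Suc i < length (drop j p) \<longrightarrow> r (drop j p ! i) > r (drop j p ! Suc i)"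
      and "j \<le> i \<and> i + 1 < length p"
    then show "r (p ! i) > r (p ! (i + 1))" by (auto dest: spec [of _ "i - j"])
  qed auto
  ultimately show ?thesis unfolding updown_def by auto
qed

lemma descending_updown: "p \<noteq> [] \<Longrightarrow> descending r p \<Longrightarrow> updown r p"
  by (cases p) (auto simp: updown_iff_peak intro!: exI [of _ 0])

lemma updown_rev:
  assumes "updown r p" shows "updown r (rev p)"
proof -
  obtain j where j: "j < length p" "ascending r (take (Suc j) p)" "descending r (drop j p)"
    using assms by (auto simp: updown_iff_peak)
  have "take (Suc (length p - Suc j)) (rev p) = rev (drop j p)"
    using j(1) by (simp add: take_rev Suc_diff_Suc)
  moreover have "drop (length p - Suc j) (rev p) = rev (take (Suc j) p)"
    using j(1) by (simp add: drop_rev)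
  ultimately show ?thesis
    using j by (auto simp: updown_iff_peak intro!: exI [of _ "length p - Suc j"])
qed

lemma updown_drop:
  assumes "updown r p" "k < length p" shows "updown r (drop k p)"
proof -
  obtain j where j: "j < length p" "ascending r (take (Suc j) p)" "descending r (drop j p)"
    using assms(1) by (auto simp: updown_iff_peak)
  show ?thesis
  proof (cases "k \<le> j")
    case True
    have "take (Suc (j - k)) (drop k p) = drop k (take (Suc j) p)"
      using True by (simp add: take_drop Suc_diff_le)
    then show ?thesis
      using True j by (auto simp: updown_iff_peak successively_drop intro!: exI [of _ "j - k"])
  next
    case False
    have "drop k p = drop (k - j) (drop j p)" using False by simp
    then have "descending r (drop k p)" using j(3) by (metis successively_drop)
    then show ?thesis
      using assms(2) by (intro descending_updown) auto
  qed
qed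

lemma updown_prepend:
  assumes "updown r ys" "ascending r (xs @ [hd ys])" shows "updown r (xs @ ys)"
proof -
  obtain j where j: "j < length ys" "ascending r (take (Suc j) ys)" "descending r (drop j ys)"
    using assms(1) by (auto simp: updown_iff_peak)
  have "ascending r (xs @ take (Suc j) ys)"
    using assms(2) j(1,2) by (auto simp: successively_append_iff)
  then show ?thesis
    using j by (auto simp: updown_iff_peak intro!: exI [of _ "length xs + j"])
qed

lemma updown_if_no_valley:
  assumes "p \<noteq> []"
    and "\<forall>i. Suc i < length p \<longrightarrow> r (p ! i) \<noteq> r (p ! Suc i)"
    and "\<forall>i. Suc (Suc i) < length p \<longrightarrow> \<not> (r (p ! i) > r (p ! Suc i) \<and> r (p ! Suc i) < r (p ! Suc (Suc i)))"
  shows "updown r p"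
  using assms
proof (induction p rule: induct_list012)
  case (2 a)
  then show ?case by (simp add: updown_def)
next
  case (3 a b q)
  have "updown r (b # q)"
  proof (rule "3.IH"(2))
    show "\<forall>i. Suc i < length (b # q) \<longrightarrow> r ((b # q) ! i) \<noteq> r ((b # q) ! Suc i)"
      using "3.prems"(2) by (metis Suc_less_eq length_Cons nth_Cons_Suc)
    show "\<forall>i. Suc (Suc i) < length (b # q) \<longrightarrow> \<not> (r ((b # q) ! i) > r ((b # q) ! Suc i) \<and>
        r ((b # q) ! Suc i) < r ((b # q) ! Suc (Suc i)))"
      using "3.prems"(3) by (metis Suc_less_eq length_Cons nth_Cons_Suc)
  qed simp
  then obtain j where j: "j < length (b # q)" "ascending r (take (Suc j) (b # q))"
    "descending r (drop j (b # q))"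
    by (auto simp: updown_iff_peak)
  consider "r a < r b" | "r a > r b" using "3.prems"(2) by (force dest: spec [of _ 0])
  then show ?case
  proof cases
    case 1
    then show ?thesis using updown_prepend [OF \<open>updown r (b # q)\<close>, of "[a]"] by simp
  next
    case 2
    have "j = 0"
    proof (rule ccontr)
      assume "j \<noteq> 0"
      then obtain c q' where "q = c # q'" "r b < r c"
        using j(1,2) by (cases q) (auto simp: successively_Cons)
      then show False using 2 "3.prems"(3) by (auto dest: spec [of _ 0])
    qed
    then show ?thesis using j(3) 2 by (intro descending_updown) auto
  qed
qed simp

lemma updown_first_step:
  assumes "updown r (a # b # q)" "r a < r (last (b # q))"
  shows "r a < r b"
proof -
  obtain j where j: "j < length (a # b # q)" "ascending r (take (Suc j) (a # b # q))"
    "descending r (drop j (a # b # q))"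
    using assms(1) by (auto simp: updown_iff_peak)
  show ?thesis
  proof (cases j)
    case 0
    have "transp (\<lambda>x y. r x > r y)" by (auto intro: transpI)
    then have "sorted_wrt (\<lambda>x y. r x > r y) (a # b # q)"
      using j(3) 0 by (simp only: successively_conv_sorted_wrt drop_0)
    then show ?thesis using assms(2) last_in_set [of "b # q"] by auto
  next
    case (Suc j')
    then show ?thesis using j(2) by simp
  qed
qed

lemma updown_splice:
  assumes peak: "j < length p" "ascending r (take (Suc j) p)" "descending r (drop j p)"
    and im: "i < m" "m \<le> j" and up: "r (p ! i) < r z"
    and exit: "r z < r (p ! m) \<or> (m = j \<and> r (p ! m) < r z)"
  shows "updown r (take (Suc i) p @ z # drop m p)"
proof -
  have "take (Suc i) p = take (Suc i) (take (Suc j) p)" using im by simp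
  then have "ascending r (take (Suc i) p)" using peak(2) by (metis successively_take)
  then have climb: "ascending r (take (Suc i) p @ [z])"
    using up im peak(1) by (simp add: successively_append_iff take_Suc_conv_app_nth)
  have "updown r (z # drop m p)"
    using exit
  proof
    assume "r z < r (p ! m)"
    moreover have "updown r (drop m p)"
      using peak im by (intro updown_drop) (auto simp: updown_iff_peak)
    ultimately show ?thesis
      using updown_prepend [of r "drop m p" "[z]"] im peak(1) by (simp add: hd_drop_conv_nth)
  next
    assume top: "m = j \<and> r (p ! m) < r z"
    then have "r (p ! j) < r z" by (elim conjE) hypsubst
    then have "descending r (z # drop j p)"
      using peak by (simp add: successively_Cons hd_drop_conv_nth)
    then show ?thesis using top by (intro descending_updown) auto
  qed
  then show ?thesis using updown_prepend climb by fastforce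
qed

text \<open>The rank weight of a list counts each of its vertices with weight \<open>2 ^ rank\<close>, so a
  single vertex outweighs any set of lower-ranked ones.\<close>
definition rank_weight :: "('a \<Rightarrow> nat) \<Rightarrow> 'a list \<Rightarrow> nat" where
  "rank_weight r p = (\<Sum>v\<in>set p. 2 ^ r v)"

lemma sum_pow2_less: "(\<Sum>k<N. (2::nat) ^ k) < 2 ^ N"
  by (induction N) auto

lemma rank_weight_splice_less:
  assumes inj: "inj_on r (set B)" and dist: "distinct (T @ B @ R)" and z: "z \<notin> set (T @ B @ R)"
    and below: "\<forall>v\<in>set B. r v < r z"
  shows "rank_weight r (T @ B @ R) < rank_weight r (T @ z # R)"
proof -
  let ?f = "\<lambda>v. (2::nat) ^ r v"
  have "(\<Sum>v\<in>set B. ?f v) = (\<Sum>k\<in>r ` set B. 2 ^ k)"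
    using inj by (simp add: sum.reindex)
  also have "\<dots> \<le> (\<Sum>k<r z. 2 ^ k)"
    using below by (intro sum_mono2) auto
  also have "\<dots> < ?f z" by (rule sum_pow2_less)
  finally have "(\<Sum>v\<in>set B. ?f v) < ?f z" .
  moreover have "rank_weight r (T @ B @ R) = sum ?f (set T) + sum ?f (set B) + sum ?f (set R)"
    using dist by (simp add: rank_weight_def sum.union_disjoint Int_Un_distrib Int_Un_distrib2
        Int_commute)
  moreover have "rank_weight r (T @ z # R) = sum ?f (set T) + ?f z + sum ?f (set R)"
    using dist z by (simp add: rank_weight_def sum.union_disjoint Int_Un_distrib)
  ultimately show ?thesis by simp
qed

lemma walk_set_subset:
  assumes "walk F p" "p \<noteq> []" "hd p \<in> V" "\<And>a b. {a, b} \<in> F \<Longrightarrow> b \<in> V"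
  shows "set p \<subseteq> V"
  using assms(1-3)
proof (induction p rule: induct_list012)
  case (3 a b q)
  then show ?case using assms(4) by auto
qed simp_all

locale weighted_graph =
  fixes V :: "'a set" and E :: "'a set set" and w :: "'a set \<Rightarrow> real"
  assumes simple: "simple_graph V E"
    and connected: "connected_graph V E"
    and weights_pos: "\<forall>e\<in>E. w e > 0"
begin

abbreviation d :: "'a \<Rightarrow> 'a \<Rightarrow> real" where "d \<equiv> distI E w"

lemma finite_V: "finite V"
  using simple by (simp add: simple_graph_def)

lemma edge_vertices: "{a, b} \<in> E \<Longrightarrow> a \<in> V \<and> b \<in> V \<and> a \<noteq> b"
  using simple unfolding simple_graph_def by (metis doubleton_eq_iff insert_absorb2)

lemma weights_nonneg: "\<forall>e\<in>E. w e \<ge> 0"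
  using weights_pos by auto

text \<open>There are only finitely many paths from a vertex, so the minimum defining \<open>d\<close> exists.\<close>
lemma path_lengths_finite:
  assumes "s \<in> V" shows "finite {plen w p | p. gpath E p \<and> hd p = s \<and> last p = t}"
proof -
  have "{p. gpath E p \<and> hd p = s \<and> last p = t} \<subseteq> {p. set p \<subseteq> V \<and> distinct p}"
  proof
    fix p assume "p \<in> {p. gpath E p \<and> hd p = s \<and> last p = t}"
    then have p: "walk E p" "p \<noteq> []" "distinct p" "hd p = s" by (auto simp: gpath_iff_walk)
    then show "p \<in> {p. set p \<subseteq> V \<and> distinct p}"
      using walk_set_subset [OF p(1,2)] assms edge_vertices by blast
  qed
  then have "finite {p. gpath E p \<and> hd p = s \<and> last p = t}"
    using finite_subset_distinct [OF finite_V] by (rule finite_subset)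
  then show ?thesis by (simp add: setcompr_eq_image)
qed

lemma dist_le_path: "s \<in> V \<Longrightarrow> gpath E p \<Longrightarrow> hd p = s \<Longrightarrow> last p = t \<Longrightarrow> d s t \<le> plen w p"
  unfolding distI_def using path_lengths_finite by (auto intro!: Min_le)

lemma dist_attained:
  assumes "s \<in> V" "t \<in> V"
  shows "\<exists>p. gpath E p \<and> hd p = s \<and> last p = t \<and> plen w p = d s t"
proof -
  have "{plen w p | p. gpath E p \<and> hd p = s \<and> last p = t} \<noteq> {}"
    using connected assms unfolding connected_graph_def by blast
  then have "d s t \<in> {plen w p | p. gpath E p \<and> hd p = s \<and> last p = t}"
    unfolding distI_def using path_lengths_finite [OF assms(1)] by (rule Min_in [rotated])
  then show ?thesis by auto
qed

lemma dist_sym: "d s t = d t s"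
proof -
  have "{plen w p | p. gpath E p \<and> hd p = s \<and> last p = t} \<subseteq>
      {plen w p | p. gpath E p \<and> hd p = t \<and> last p = s}" for s t
  proof (intro subsetI)
    fix s t x assume "x \<in> {plen w p | p. gpath E p \<and> hd p = s \<and> last p = t}"
    then obtain p where "gpath E p" "hd p = s" "last p = t" "x = plen w p" by blast
    then have "gpath E (rev p) \<and> hd (rev p) = t \<and> last (rev p) = s \<and> x = plen w (rev p)"
      by (auto simp: gpath_rev plen_rev hd_rev last_rev)
    then show "x \<in> {plen w p | p. gpath E p \<and> hd p = t \<and> last p = s}" by blast
  qed
  then have "{plen w p | p. gpath E p \<and> hd p = s \<and> last p = t} =
      {plen w p | p. gpath E p \<and> hd p = t \<and> last p = s}"
    by (rule subset_antisym) fact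
  then show ?thesis unfolding distI_def by simp
qed

lemma dist_nonneg: "s \<in> V \<Longrightarrow> t \<in> V \<Longrightarrow> 0 \<le> d s t"
  using dist_attained plen_nonneg weights_nonneg by (metis gpath_iff_walk)

lemma dist_pos:
  assumes "s \<in> V" "t \<in> V" "s \<noteq> t" shows "0 < d s t"
proof -
  obtain p where p: "gpath E p" "hd p = s" "last p = t" "plen w p = d s t"
    using dist_attained assms by blast
  then obtain b q where p_eq: "p = s # b # q"
    using assms(3) by (cases p; cases "tl p") (auto simp: gpath_def)
  then have "w {s, b} > 0" "plen w (b # q) \<ge> 0"
    using p weights_pos weights_nonneg plen_nonneg by (auto simp: gpath_iff_walk)
  then show ?thesis using p p_eq by simp
qed

lemma dist_self: "s \<in> V \<Longrightarrow> d s s = 0"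
  using dist_le_path [of s "[s]" s] dist_nonneg by (force simp: gpath_def)

lemma dist_le_walk:
  assumes "walk E p" "p \<noteq> []" "hd p \<in> V" shows "d (hd p) (last p) \<le> plen w p"
proof -
  obtain q where "gpath E q" "hd q = hd p" "last q = last p" "plen w q \<le> plen w p"
    using walk_to_path [OF assms(1,2) weights_nonneg] by blast
  then show ?thesis using dist_le_path assms(3) by fastforce
qed

lemma dist_triangle:
  assumes "s \<in> V" "u \<in> V" "t \<in> V" shows "d s t \<le> d s u + d u t"
proof -
  obtain p where p: "gpath E p" "hd p = s" "last p = u" "plen w p = d s u"
    using dist_attained assms by blast
  obtain q where q: "gpath E q" "hd q = u" "last q = t" "plen w q = d u t"
    using dist_attained assms by blast
  show ?thesis
  proof (cases "tl q")
    case Nil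
    then have "q = [u]" using q by (cases q) (auto simp: gpath_def)
    then show ?thesis using p q dist_le_path assms(1) by fastforce
  next
    case (Cons c q')
    then have q_eq: "q = u # c # q'" using q by (cases q) (auto simp: gpath_def)
    have "walk E (p @ c # q')"
      using p q q_eq by (auto simp: gpath_iff_walk walk_append_iff)
    moreover have "plen w (p @ c # q') = plen w p + plen w q"
      using p q_eq by (subst plen_append) (auto simp: gpath_def)
    ultimately show ?thesis
      using dist_le_walk [of "p @ c # q'"] p q q_eq assms(1) by (auto simp: gpath_def)
  qed
qed

lemma dist_le_weight: "{a, b} \<in> E \<Longrightarrow> d a b \<le> w {a, b}"
  using dist_le_path [of a "[a, b]" b] edge_vertices by (auto simp: gpath_def)

lemma mP_eq: "mP E w {x, y} = d x y"
  unfolding mP_def by (rule some_equality) (auto simp: doubleton_eq_iff dist_sym)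

end

section \<open>The contraction hierarchy\<close>

locale contraction_hierarchy = weighted_graph V E w
  for V :: "'a set" and E :: "'a set set" and w :: "'a set \<Rightarrow> real" +
  fixes \<pi> :: "nat \<Rightarrow> 'a"
  assumes order: "bij_betw \<pi> {1..card V} V"
begin

abbreviation rk :: "'a \<Rightarrow> nat" where "rk \<equiv> rank V \<pi>"
abbreviation ES :: "'a set set" where "ES \<equiv> Estar V E \<pi>"
abbreviation M :: "'a set \<Rightarrow> real" where "M \<equiv> mP E w"

lemma rank_range: "v \<in> V \<Longrightarrow> rk v \<in> {1..card V}"
  using order unfolding rank_def bij_betw_def by (metis inv_into_into)

lemma order_rank: "v \<in> V \<Longrightarrow> \<pi> (rk v) = v"
  using order unfolding rank_def bij_betw_def by (metis f_inv_into_f)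

lemma rank_order: "l \<in> {1..card V} \<Longrightarrow> rk (\<pi> l) = l"
  using order unfolding rank_def bij_betw_def by (metis inv_into_f_f)

lemma rank_inj: "u \<in> V \<Longrightarrow> v \<in> V \<Longrightarrow> rk u = rk v \<Longrightarrow> u = v"
  using order_rank by metis

lemma core_pair: "{a, b} \<in> core E \<pi> k \<Longrightarrow> a \<in> V \<and> b \<in> V \<and> a \<noteq> b"
proof (induction k arbitrary: a b)
  case 0
  then show ?case using edge_vertices by simp
next
  case (Suc k)
  show ?case
  proof (cases "{a, b} \<in> core E \<pi> k")
    case False
    then obtain x y where xy: "{a, b} = {x, y}" "x \<noteq> y"
      "{x, \<pi> (Suc k)} \<in> core E \<pi> k" "{y, \<pi> (Suc k)} \<in> core E \<pi> k"
      using Suc.prems by (auto simp: contract_def)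
    then show ?thesis using Suc.IH [OF xy(3)] Suc.IH [OF xy(4)] by (auto simp: doubleton_eq_iff)
  qed (use Suc.IH in blast)
qed

lemma core_avoid: "l \<in> {1..card V} \<Longrightarrow> l \<le> k \<Longrightarrow> e \<in> core E \<pi> k \<Longrightarrow> \<pi> l \<notin> e"
proof (induction k arbitrary: e)
  case (Suc k)
  then consider "e \<in> core E \<pi> k" "\<pi> (Suc k) \<notin> e"
    | x y where "e = {x, y}" "x \<noteq> y" "{x, \<pi> (Suc k)} \<in> core E \<pi> k" "{y, \<pi> (Suc k)} \<in> core E \<pi> k"
    by (auto simp: contract_def)
  then show ?case
  proof cases
    case 1
    then show ?thesis using Suc by (cases "l = Suc k") auto
  next
    case 2
    then have "x \<noteq> \<pi> (Suc k)" "y \<noteq> \<pi> (Suc k)" using core_pair by blast+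
    then show ?thesis using 2 Suc by (cases "l = Suc k") auto
  qed
qed simp

lemma core_persist:
  assumes "e \<in> core E \<pi> k" "k \<le> k'" "\<forall>l. k < l \<and> l \<le> k' \<longrightarrow> \<pi> l \<notin> e"
  shows "e \<in> core E \<pi> k'"
  using assms(2,3)
proof (induction k' rule: dec_induct)
  case base
  then show ?case using assms(1) by simp
next
  case (step k'')
  then show ?case by (simp add: contract_def)
qed

lemma ES_pair: "{a, b} \<in> ES \<Longrightarrow> a \<in> V \<and> b \<in> V \<and> a \<noteq> b"
  unfolding Estar_def using core_pair by blast

lemma E_subset_ES: "E \<subseteq> ES"
proof
  fix e assume e: "e \<in> E"
  then have "V \<noteq> {}" using simple by (auto simp: simple_graph_def)
  then have "0 < card V" using finite_V by (simp add: card_gt_0_iff)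
  then show "e \<in> ES" using e unfolding Estar_def by force
qed

text \<open>An edge from \<open>x\<close> to a higher-ranked vertex is still present in the core graph in
  which \<open>x\<close> gets contracted.\<close>
lemma upward_edge_in_core:
  assumes xv: "{x, v} \<in> ES" and up: "rk x < rk v"
  shows "{x, v} \<in> core E \<pi> (rk x - 1)"
proof -
  from xv obtain k where k: "k < card V" "{x, v} \<in> core E \<pi> k" unfolding Estar_def by blast
  have V: "x \<in> V" "v \<in> V" using ES_pair xv by auto
  have "k < rk x"
  proof (rule ccontr)
    assume "\<not> k < rk x"
    then show False using core_avoid [OF rank_range [OF V(1)] _ k(2)] order_rank V by simp
  qed
  moreover have "\<pi> l \<notin> {x, v}" if "k < l" "l \<le> rk x - 1" for l
  proof -
    have "l \<in> {1..card V}" using that rank_range [OF V(1)] by auto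
    then show ?thesis using that up rank_order by fastforce
  qed
  ultimately show ?thesis using core_persist [OF k(2)] by simp
qed

text \<open>The basic structural property of contraction hierarchies: the higher-ranked
  neighbours of a vertex in \<open>G\<^sup>*\<close> form a clique, because they are joined when it is contracted.\<close>
lemma upward_clique:
  assumes xu: "{x, u} \<in> ES" and xz: "{x, z} \<in> ES"
    and up: "rk x < rk u" "rk x < rk z" and uz: "u \<noteq> z"
  shows "{u, z} \<in> ES"
proof -
  have V: "x \<in> V" "u \<in> V" using ES_pair xu by auto
  let ?r = "rk x"
  have r: "?r \<in> {1..card V}" "\<pi> ?r = x" using rank_range order_rank V by auto
  have "{u, \<pi> ?r} \<in> core E \<pi> (?r - 1)" "{z, \<pi> ?r} \<in> core E \<pi> (?r - 1)"
    using upward_edge_in_core [OF xu up(1)] upward_edge_in_core [OF xz up(2)] r(2)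
    by (simp_all add: insert_commute)
  then have "{u, z} \<in> contract (\<pi> ?r) (core E \<pi> (?r - 1))"
    unfolding contract_def using uz by blast
  moreover have "?r = Suc (?r - 1)" using r by auto
  ultimately have "{u, z} \<in> core E \<pi> ?r" by (metis core.simps(2))
  moreover have "?r < card V" using rank_range [OF V(2)] up(1) by auto
  ultimately show ?thesis unfolding Estar_def by blast
qed

lemma walk_ES_in_V: "walk ES p \<Longrightarrow> p \<noteq> [] \<Longrightarrow> hd p \<in> V \<Longrightarrow> set p \<subseteq> V"
  using walk_set_subset ES_pair by metis

lemma dist_le_mP_walk:
  assumes "walk ES p" "p \<noteq> []" "hd p \<in> V"
  shows "d (hd p) (last p) \<le> plen M p"
  using assms
proof (induction p rule: induct_list012)
  case (3 a b q)
  have ab: "{a, b} \<in> ES" and walk: "walk ES (b # q)" using "3.prems"(1) by auto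
  have b: "b \<in> V" using ES_pair ab by auto
  have "last (b # q) \<in> V" using walk_ES_in_V [OF walk] b by auto
  then have "d a (last (b # q)) \<le> d a b + d b (last (b # q))"
    using dist_triangle "3.prems"(3) b by simp
  then show ?case using "3.IH"(2) walk b by (simp add: mP_eq)
qed (simp_all add: dist_self)

lemma shortest_walk_dist:
  assumes walk: "walk ES p" and ne: "p \<noteq> []" and hd: "hd p \<in> V"
    and shortest: "plen M p = d (hd p) (last p)"
    and ab: "a \<le> b" "b < length p"
  shows "d (p ! a) (p ! b) = plen M (take (Suc b) p) - plen M (take (Suc a) p)"
proof -
  have V: "p ! a \<in> V" "p ! b \<in> V" "last p \<in> V"
    using walk_ES_in_V [OF walk ne hd] ab ne by (auto simp: last_conv_nth)
  have split_b: "plen M p = plen M (take (Suc b) p) + plen M (drop b p)"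
    using plen_take_drop ab by blast
  have split_a: "plen M (take (Suc b) p) = plen M (take (Suc a) p) + plen M (drop a (take (Suc b) p))"
    using plen_take_drop [of a "take (Suc b) p" M] ab by (simp add: min_def)
  have "hd (take (Suc a) p) = hd p" "last (take (Suc a) p) = p ! a"
    using ne ab by (cases p, simp_all add: take_Suc_conv_app_nth)
  then have prefix: "d (hd p) (p ! a) \<le> plen M (take (Suc a) p)"
    using dist_le_mP_walk [of "take (Suc a) p"] walk_take [OF walk] ne hd by fastforce
  moreover have "hd (drop a (take (Suc b) p)) = p ! a"
    using ab by (simp add: hd_drop_conv_nth)
  moreover have "last (drop a (take (Suc b) p)) = p ! b"
    using ab by (simp add: take_Suc_conv_app_nth)
  ultimately have "d (p ! a) (p ! b) \<le> plen M (drop a (take (Suc b) p))"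
    using dist_le_mP_walk [of "drop a (take (Suc b) p)"] walk_drop [OF walk_take [OF walk]] ab V
    by fastforce
  moreover note prefix
  moreover have "d (p ! b) (last p) \<le> plen M (drop b p)"
    using dist_le_mP_walk [of "drop b p"] walk_drop [OF walk] ab V by (simp add: hd_drop_conv_nth)
  moreover have "d (hd p) (last p) \<le> d (hd p) (p ! a) + d (p ! a) (p ! b) + d (p ! b) (last p)"
    using dist_triangle [of "hd p" "p ! a" "last p"] dist_triangle [of "p ! a" "p ! b" "last p"] hd V
    by simp
  ultimately show ?thesis using split_a split_b shortest by linarith
qed

corollary shortest_walk_between:
  assumes "walk ES p" "p \<noteq> []" "hd p \<in> V" "plen M p = d (hd p) (last p)"
    and "a \<le> b" "b \<le> c" "c < length p"
  shows "d (p ! a) (p ! c) = d (p ! a) (p ! b) + d (p ! b) (p ! c)"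
  using shortest_walk_dist [OF assms(1-4)] assms(5-7) by simp

text \<open>Every pair of vertices is joined by a path in \<open>G\<^sup>*\<close> of \<open>M\<close>-length equal to their
  distance: a shortest path of \<open>G\<close> itself.\<close>
lemma shortest_ES_path_exists:
  assumes "s \<in> V" "t \<in> V"
  shows "\<exists>p. gpath ES p \<and> hd p = s \<and> last p = t \<and> plen M p = d s t"
proof -
  obtain p where p: "gpath E p" "hd p = s" "last p = t" "plen w p = d s t"
    using dist_attained assms by blast
  have path: "gpath ES p" using p E_subset_ES walk_mono by (auto simp: gpath_iff_walk)
  have "plen M p \<le> plen w p"
    unfolding plen_def
  proof (rule sum_mono)
    fix i assume "i \<in> {..<length p - 1}"
    then have "{p ! i, p ! (i + 1)} \<in> E" using p by (auto simp: gpath_def)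
    then show "M {p ! i, p ! (i + 1)} \<le> w {p ! i, p ! (i + 1)}"
      using dist_le_weight mP_eq by simp
  qed
  moreover have "d s t \<le> plen M p"
    using dist_le_mP_walk [of p] path p assms by (auto simp: gpath_iff_walk)
  ultimately show ?thesis using path p by (intro exI [of _ p]) auto
qed

section \<open>Existence of shortest up-down paths\<close>

text \<open>A valley \<open>a, b, c\<close> (with \<open>b\<close> below both neighbours) on a shortest path can be bypassed
  by the clique edge \<open>{a, c}\<close> without changing the length.\<close>
lemma valley_shortcut:
  assumes path: "gpath ES p" and hd: "hd p \<in> V" and shortest: "plen M p = d (hd p) (last p)"
    and k: "Suc (Suc k) < length p"
    and valley: "rk (p ! Suc k) < rk (p ! k)" "rk (p ! Suc k) < rk (p ! Suc (Suc k))"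
  shows "\<exists>q. gpath ES q \<and> hd q = hd p \<and> last q = last p \<and> plen M q = plen M p \<and>
    length q < length p"
proof -
  have walk: "walk ES p" and dist: "distinct p" and ne: "p \<noteq> []"
    using path by (auto simp: gpath_iff_walk)
  let ?a = "p ! k" and ?b = "p ! Suc k" and ?c = "p ! Suc (Suc k)"
  have "{?b, ?a} \<in> ES" "{?b, ?c} \<in> ES"
    using walk k by (auto simp: walk_def successively_conv_nth insert_commute)
  moreover have "?a \<noteq> ?c" using dist k by (simp add: nth_eq_iff_index_eq)
  ultimately have ac: "{?a, ?c} \<in> ES" using upward_clique valley by blast
  define T where "T = take (Suc k) p"
  define R where "R = drop (Suc (Suc k)) p"
  have T: "T \<noteq> []" "last T = ?a" "hd T = hd p"
    using k ne by (auto simp: T_def take_Suc_conv_app_nth hd_conv_nth nth_append)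
  have R: "R \<noteq> []" "hd R = ?c" "last R = last p" using k by (auto simp: R_def hd_drop_conv_nth)
  have "gpath ES (T @ R)"
    using walk_take [OF walk] walk_drop [OF walk] dist T R ac
      set_take_disj_set_drop_if_distinct [OF dist, of "Suc k" "Suc (Suc k)"]
    by (auto simp: gpath_iff_walk walk_append_iff T_def R_def)
  moreover have "plen M (T @ R) = plen M p"
  proof -
    have "plen M (T @ R) = plen M T + d ?a ?c + plen M R"
      using plen_append [OF T(1) R(1)] T R by (simp add: mP_eq)
    moreover have "plen M p = plen M (take (Suc (Suc (Suc k))) p) + plen M R"
      using plen_take_drop k unfolding R_def by blast
    moreover have "d ?a ?c = plen M (take (Suc (Suc (Suc k))) p) - plen M T"
      using shortest_walk_dist [OF walk ne hd shortest, of k "Suc (Suc k)"] k by (simp add: T_def)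
    ultimately show ?thesis by simp
  qed
  moreover have "length (T @ R) < length p" using k by (simp add: T_def R_def)
  ultimately show ?thesis using T R by (intro exI [of _ "T @ R"]) auto
qed

definition updown_shortest :: "'a \<Rightarrow> 'a \<Rightarrow> 'a list set" where
  "updown_shortest s t =
    {p. gpath ES p \<and> hd p = s \<and> last p = t \<and> updown rk p \<and> plen M p = d s t}"

text \<open>A shortest path of \<open>G\<^sup>*\<close> with as few vertices as possible has no valley, hence is up-down.\<close>
lemma updown_shortest_exists:
  assumes st: "s \<in> V" "t \<in> V" shows "updown_shortest s t \<noteq> {}"
proof -
  let ?P = "\<lambda>p. gpath ES p \<and> hd p = s \<and> last p = t \<and> plen M p = d s t"
  obtain p0 where "?P p0" using shortest_ES_path_exists st by blast
  then obtain p where p: "?P p" and minimal: "\<And>q. ?P q \<Longrightarrow> length p \<le> length q"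
    using ex_has_least_nat [of ?P p0 length] by blast
  have walk: "walk ES p" and dist: "distinct p" and ne: "p \<noteq> []"
    using p by (auto simp: gpath_iff_walk)
  have V: "set p \<subseteq> V" using walk_ES_in_V walk ne p st by blast
  have "updown rk p"
  proof (rule updown_if_no_valley [OF ne])
    show "\<forall>i. Suc i < length p \<longrightarrow> rk (p ! i) \<noteq> rk (p ! Suc i)"
    proof (intro allI impI)
      fix i assume "Suc i < length p"
      then have "p ! i \<noteq> p ! Suc i" "p ! i \<in> V" "p ! Suc i \<in> V"
        using dist V by (auto simp: nth_eq_iff_index_eq)
      then show "rk (p ! i) \<noteq> rk (p ! Suc i)" using rank_inj by blast
    qed
    show "\<forall>i. Suc (Suc i) < length p \<longrightarrow>
        \<not> (rk (p ! i) > rk (p ! Suc i) \<and> rk (p ! Suc i) < rk (p ! Suc (Suc i)))"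
      using valley_shortcut [of p] p minimal st by fastforce
  qed
  then show ?thesis using p by (auto simp: updown_shortest_def)
qed

section \<open>Part (ii): edges that are not bypassed\<close>

text \<open>If a shortest up-down path from \<open>x\<close> to a higher neighbour \<open>y\<close> is not the edge itself,
  its second vertex \<open>b\<close> witnesses that \<open>{x, y}\<close> is bypassed.\<close>
lemma detour_witnesses_bypass:
  assumes xy: "{x, y} \<in> ES" "rk x < rk y"
    and p: "p \<in> updown_shortest x y" and detour: "p \<noteq> [x, y]"
  shows "{x, y} \<in> Rset V E w \<pi>"
proof -
  have V: "x \<in> V" "y \<in> V" "x \<noteq> y" using ES_pair xy(1) by auto
  have path: "gpath ES p" "hd p = x" "last p = y" "updown rk p" "plen M p = d x y"
    using p by (auto simp: updown_shortest_def)
  obtain b q where p_eq: "p = x # b # q"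
    using path V(3) by (cases p rule: remdups_adj.cases) (auto simp: gpath_def)
  have "q \<noteq> []" using p_eq path detour by auto
  then have last_q: "last (b # q) = y" using path p_eq by simp
  have up: "rk x < rk b" using updown_first_step [of rk x b q] path p_eq last_q xy(2) by simp
  have "b \<noteq> y" using path p_eq last_q \<open>q \<noteq> []\<close> by (auto simp: gpath_def)
  have xb: "{x, b} \<in> ES" and walk: "walk ES (b # q)" using path p_eq by (auto simp: gpath_iff_walk)
  have b: "b \<in> V" using ES_pair xb by auto
  have by_: "{b, y} \<in> ES" using upward_clique [OF xb xy(1) up xy(2) \<open>b \<noteq> y\<close>] .
  have "d b y \<le> plen M (b # q)" using dist_le_mP_walk [OF walk] b last_q by simp
  moreover have "plen M p = d x b + plen M (b # q)" using p_eq by (simp add: mP_eq)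
  moreover have "d x y \<le> d x b + d b y" using dist_triangle V b by blast
  ultimately have "M {x, y} = M {x, b} + M {b, y}" using path(5) by (simp add: mP_eq)
  then show ?thesis unfolding Rset_def using xy by_ \<open>b \<noteq> y\<close> up xb by blast
qed

lemma unbypassed_edge_unique:
  assumes xy: "{x, y} \<in> ES" "{x, y} \<notin> Rset V E w \<pi>" and p: "p \<in> updown_shortest x y"
  shows "p = [x, y]"
proof -
  have V: "x \<in> V" "y \<in> V" "x \<noteq> y" using ES_pair xy by auto
  then have "rk x \<noteq> rk y" using rank_inj by blast
  then consider "rk x < rk y" | "rk y < rk x" by linarith
  then show ?thesis
  proof cases
    case 1
    then show ?thesis using detour_witnesses_bypass [OF xy(1) 1 p] xy(2) by blast
  next
    case 2
    have "rev p \<in> updown_shortest y x"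
      using p by (auto simp: updown_shortest_def gpath_rev hd_rev last_rev updown_rev plen_rev
          dist_sym)
    then have "rev p = [y, x]"
      using detour_witnesses_bypass [of y x "rev p"] xy 2 by (metis insert_commute)
    then show ?thesis by (metis rev_rev_ident rev.simps append.simps)
  qed
qed

section \<open>Part (i): a path avoiding bypassed edges\<close>

text \<open>A vertex \<open>z\<close> lying metrically between the ends of an edge \<open>{p ! i, p ! (i + 1)}\<close> of a
  shortest walk cannot lie elsewhere on that walk: it would then be passed twice.\<close>
lemma between_vertex_off_walk:
  assumes walk: "walk ES p" "p \<noteq> []" "hd p \<in> V" and shortest: "plen M p = d (hd p) (last p)"
    and i: "i + 1 < length p" and z: "z \<in> V" "z \<noteq> p ! i" "z \<noteq> p ! (i + 1)"
    and between: "d (p ! i) (p ! (i + 1)) = d (p ! i) z + d z (p ! (i + 1))"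
  shows "z \<notin> set p"
proof
  assume "z \<in> set p"
  then obtain k where k: "k < length p" "p ! k = z" by (auto simp: in_set_conv_nth)
  have V: "p ! i \<in> V" "p ! (i + 1) \<in> V" using walk_ES_in_V [OF walk] i by auto
  have "k \<noteq> i" "k \<noteq> i + 1" using k z by auto
  then consider "i + 1 < k" | "k < i" by linarith
  then show False
  proof cases
    case 1
    then have "d (p ! i) z = d (p ! i) (p ! (i + 1)) + d (p ! (i + 1)) z"
      using shortest_walk_between [OF walk shortest, of i "i + 1" k] k by simp
    then have "d (p ! (i + 1)) z + d z (p ! (i + 1)) = 0" using between by simp
    then show False using dist_pos [of z "p ! (i + 1)"] dist_sym z V by simp
  next
    case 2
    then have "d z (p ! (i + 1)) = d z (p ! i) + d (p ! i) (p ! (i + 1))"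
      using shortest_walk_between [OF walk shortest, of k i "i + 1"] k i by simp
    then have "d (p ! i) z + d z (p ! i) = 0" using between by simp
    then show False using dist_pos [of z "p ! i"] dist_sym z V by simp
  qed
qed

text \<open>Climbing a walk through vertices ranked below \<open>z\<close> keeps every reached vertex adjacent
  to \<open>z\<close>, by repeated use of the upward clique property.\<close>
lemma upward_chain:
  assumes walk: "walk ES p" and z: "z \<notin> set p" and start: "{z, p ! a} \<in> ES"
    and ab: "a \<le> b" "b < length p"
    and climb: "\<And>k. a \<le> k \<Longrightarrow> k < b \<Longrightarrow> rk (p ! k) < rk (p ! Suc k) \<and> rk (p ! k) < rk z"
  shows "{z, p ! b} \<in> ES"
  using ab
proof (induction b rule: dec_induct)
  case base
  then show ?case using start by simp
next
  case (step k)
  have "{p ! k, z} \<in> ES" using step by (simp add: insert_commute)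
  moreover have "{p ! k, p ! Suc k} \<in> ES"
    using walk step by (simp add: walk_def successively_conv_nth)
  moreover have "z \<noteq> p ! Suc k" using z step by auto
  ultimately show ?case using upward_clique climb [of k] step by blast
qed

lemma splice_length:
  assumes walk: "walk ES p" "p \<noteq> []" "hd p \<in> V" and shortest: "plen M p = d (hd p) (last p)"
    and im: "i < m" "m < length p" and z: "z \<in> V"
    and between: "d (p ! i) (p ! (i + 1)) = d (p ! i) z + d z (p ! (i + 1))"
  shows "plen M (take (Suc i) p @ z # drop m p) \<le> plen M p"
proof -
  let ?T = "take (Suc i) p" and ?R = "drop m p"
  have V: "p ! (i + 1) \<in> V" "p ! m \<in> V" using walk_ES_in_V [OF walk] im by auto
  have "?T \<noteq> []" "last ?T = p ! i" "?R = p ! m # drop (Suc m) p"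
    using im by (auto simp: take_Suc_conv_app_nth Cons_nth_drop_Suc)
  then have "plen M (?T @ z # ?R) = plen M ?T + d (p ! i) z + d z (p ! m) + plen M ?R"
    using plen_append [of ?T "z # ?R" M] by (simp add: mP_eq)
  moreover have "plen M p = plen M (take (Suc m) p) + plen M ?R"
    using plen_take_drop im by blast
  moreover have "d (p ! i) (p ! m) = plen M (take (Suc m) p) - plen M ?T"
    using shortest_walk_dist [OF walk shortest, of i m] im by simp
  moreover have "d (p ! i) (p ! m) = d (p ! i) (p ! (i + 1)) + d (p ! (i + 1)) (p ! m)"
    using shortest_walk_between [OF walk shortest, of i "i + 1" m] im by simp
  moreover have "d z (p ! m) \<le> d z (p ! (i + 1)) + d (p ! (i + 1)) (p ! m)"
    using dist_triangle z V by blast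
  ultimately show ?thesis using between by linarith
qed

lemma splice_updown_shortest:
  assumes p: "p \<in> updown_shortest s t" and s: "s \<in> V"
    and peak: "j < length p" "ascending rk (take (Suc j) p)" "descending rk (drop j p)"
    and im: "i < m" "m \<le> j"
    and z: "z \<notin> set p" "z \<in> V" "rk (p ! i) < rk z" "{p ! i, z} \<in> ES" "{z, p ! m} \<in> ES"
    and between: "d (p ! i) (p ! (i + 1)) = d (p ! i) z + d z (p ! (i + 1))"
    and exit: "rk z < rk (p ! m) \<or> m = j"
  shows "take (Suc i) p @ z # drop m p \<in> updown_shortest s t"
proof -
  have path: "gpath ES p" "hd p = s" "last p = t" "plen M p = d s t"
    using p by (auto simp: updown_shortest_def)
  then have walk: "walk ES p" and dist: "distinct p" and ne: "p \<noteq> []"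
    by (auto simp: gpath_iff_walk)
  let ?T = "take (Suc i) p" and ?R = "drop m p"
  have T: "?T \<noteq> []" "last ?T = p ! i" "hd ?T = s"
    using im peak(1) path ne by (auto simp: take_Suc_conv_app_nth hd_conv_nth nth_append)
  have R: "?R \<noteq> []" "hd ?R = p ! m" "last ?R = t"
    using im peak(1) path by (auto simp: hd_drop_conv_nth)
  have "distinct (?T @ z # ?R)"
    using dist z(1) set_take_disj_set_drop_if_distinct [OF dist, of "Suc i" m] im
    by (auto dest: in_set_takeD in_set_dropD)
  moreover have "walk ES (z # ?R)"
    using walk_append_iff [of ES "[z]" ?R] walk_drop [OF walk] R z(5) by simp
  then have "walk ES (?T @ z # ?R)"
    using walk_take [OF walk] T z(4) by (simp add: walk_append_iff)
  ultimately have q_path: "gpath ES (?T @ z # ?R)" by (simp add: gpath_iff_walk)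
  have "rk (p ! m) \<noteq> rk z"
    using z(1,2) rank_inj walk_ES_in_V [OF walk ne] path s im peak(1) by force
  then have "rk z < rk (p ! m) \<or> (m = j \<and> rk (p ! m) < rk z)"
    using exit by linarith
  then have "updown rk (?T @ z # ?R)"
    by (rule updown_splice [OF peak im z(3)])
  moreover have "plen M (?T @ z # ?R) = d s t"
  proof -
    have "plen M (?T @ z # ?R) \<le> d s t"
      using splice_length [OF walk ne _ _ _ _ z(2) between] path s im peak(1) by simp
    moreover have "d s t \<le> plen M (?T @ z # ?R)"
      using dist_le_mP_walk [of "?T @ z # ?R"] q_path T R s by (simp add: gpath_iff_walk)
    ultimately show ?thesis by simp
  qed
  ultimately show ?thesis using q_path T R by (simp add: updown_shortest_def)
qed

lemma splice_rank_weight_less: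
  assumes dist: "distinct p" and V: "set p \<subseteq> V" and off: "z \<notin> set p"
    and im: "i < m" "m \<le> length p"
    and below: "\<And>k. i < k \<Longrightarrow> k < m \<Longrightarrow> rk (p ! k) < rk z"
  shows "rank_weight rk p < rank_weight rk (take (Suc i) p @ z # drop m p)"
proof -
  define B where "B = drop (Suc i) (take m p)"
  have decomp: "take (Suc i) p @ B @ drop m p = p"
  proof -
    have "take (Suc i) (take m p) = take (Suc i) p" using im(1) by (simp add: min_def)
    then have "take m p = take (Suc i) p @ B"
      unfolding B_def using append_take_drop_id [of "Suc i" "take m p"] by simp
    then show ?thesis using append_take_drop_id [of m p] by simp
  qed
  have "rk v < rk z" if "v \<in> set B" for v
  proof -
    from that obtain l where l: "l < length B" "v = B ! l" by (auto simp: in_set_conv_nth)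
    have "Suc i + l < m" using l(1) unfolding B_def by simp
    moreover have "v = p ! (Suc i + l)" using l calculation unfolding B_def by simp
    ultimately show ?thesis using below [of "Suc i + l"] by simp
  qed
  moreover have "inj_on rk (set B)"
    using V rank_inj unfolding B_def by (meson in_set_dropD in_set_takeD inj_onI subsetD)
  ultimately have "rank_weight rk (take (Suc i) p @ B @ drop m p) <
      rank_weight rk (take (Suc i) p @ z # drop m p)"
    using rank_weight_splice_less [of rk B "take (Suc i) p" "drop m p" z] dist off
    unfolding decomp by blast
  then show ?thesis unfolding decomp .
qed

text \<open>Core of part (i): on a shortest up-down path of maximal rank weight no ascending edge
  \<open>{x, y}\<close> is bypassed. Otherwise walk up from \<open>y\<close> while the ranks stay below the witness \<open>z\<close>;
  all these vertices are adjacent to \<open>z\<close>, so the detour \<open>x, z, \<dots>\<close> is again a shortest up-down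
  path, and it trades vertices ranked below \<open>z\<close> for \<open>z\<close>, increasing the rank weight.\<close>
lemma maximal_no_rising_bypass:
  assumes st: "s \<in> V" "t \<in> V" and p: "p \<in> updown_shortest s t"
    and maximal: "\<forall>q\<in>updown_shortest s t. rank_weight rk q \<le> rank_weight rk p"
    and i: "i + 1 < length p" and rising: "rk (p ! i) < rk (p ! (i + 1))"
    and z: "z \<noteq> p ! (i + 1)" "rk (p ! i) < rk z" "{p ! i, z} \<in> ES" "{z, p ! (i + 1)} \<in> ES"
      "M {p ! i, p ! (i + 1)} = M {p ! i, z} + M {z, p ! (i + 1)}"
  shows False
proof -
  have path: "gpath ES p" "hd p = s" "last p = t" "updown rk p" "plen M p = d s t"
    using p by (auto simp: updown_shortest_def)
  then have walk: "walk ES p" and dist: "distinct p" and ne: "p \<noteq> []"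
    by (auto simp: gpath_iff_walk)
  have hd: "hd p \<in> V" using path(2) st(1) by simp
  have V: "set p \<subseteq> V" using walk_ES_in_V [OF walk ne hd] .
  have zV: "z \<in> V" using ES_pair z(3) by blast
  have between: "d (p ! i) (p ! (i + 1)) = d (p ! i) z + d z (p ! (i + 1))"
    using z(5) by (simp add: mP_eq)
  have "z \<noteq> p ! i" using z(2) by auto
  then have off: "z \<notin> set p"
    using between_vertex_off_walk [OF walk ne hd _ i zV _ z(1) between] path(2,3,5) by simp
  obtain j where peak: "j < length p" "ascending rk (take (Suc j) p)" "descending rk (drop j p)"
    using path(4) by (auto simp: updown_iff_peak)
  have ascent: "rk (p ! k) < rk (p ! Suc k)" if "k < j" for k
    using successively_nth [OF peak(2), of k] that peak(1) by simp
  have "i < j"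
  proof (rule ccontr)
    assume "\<not> i < j"
    then have "Suc (i - j) < length (drop j p)" using i by simp
    then have "rk (drop j p ! (i - j)) > rk (drop j p ! Suc (i - j))"
      by (rule successively_nth [OF peak(3)])
    then show False using \<open>\<not> i < j\<close> i rising by simp
  qed
  define m where "m = (LEAST k. i < k \<and> k \<le> j \<and> (rk z < rk (p ! k) \<or> k = j))"
  have m: "i < m" "m \<le> j" "rk z < rk (p ! m) \<or> m = j"
    using LeastI [of "\<lambda>k. i < k \<and> k \<le> j \<and> (rk z < rk (p ! k) \<or> k = j)" j] \<open>i < j\<close>
    unfolding m_def by auto
  have below: "rk (p ! k) < rk z" if "i < k" "k < m" for k
  proof -
    have "\<not> rk z < rk (p ! k)"
      using not_less_Least [of k "\<lambda>k. i < k \<and> k \<le> j \<and> (rk z < rk (p ! k) \<or> k = j)"] that m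
      unfolding m_def by auto
    moreover have "k < length p" using that m peak(1) by simp
    then have "p ! k \<noteq> z" "p ! k \<in> V" using off V by (auto dest: nth_mem)
    then have "rk (p ! k) \<noteq> rk z" using zV rank_inj by blast
    ultimately show ?thesis by simp
  qed
  have "{z, p ! m} \<in> ES"
    using upward_chain [OF walk off z(4), of m] m peak(1) ascent below by simp
  then have "take (Suc i) p @ z # drop m p \<in> updown_shortest s t"
    using splice_updown_shortest [OF p st(1) peak m(1,2) off zV z(2,3) _ between m(3)] by blast
  moreover have "rank_weight rk p < rank_weight rk (take (Suc i) p @ z # drop m p)"
    using splice_rank_weight_less [OF dist V off m(1)] m(2) peak(1) below by simp
  ultimately show False using maximal by fastforce
qed

text \<open>Part (i): a shortest up-down path of maximal rank weight uses no bypassed edge; descending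
  edges are handled by reversing the path.\<close>
lemma bypass_free_updown_shortest:
  assumes st: "s \<in> V" "t \<in> V"
  shows "\<exists>p. p \<in> updown_shortest s t \<and>
    (\<forall>i. i + 1 < length p \<longrightarrow> {p ! i, p ! (i + 1)} \<notin> Rset V E w \<pi>)"
proof -
  have finite: "finite (updown_shortest s t)"
  proof (rule finite_subset)
    show "updown_shortest s t \<subseteq> {p. set p \<subseteq> V \<and> distinct p}"
    proof
      fix p assume "p \<in> updown_shortest s t"
      then have "walk ES p" "p \<noteq> []" "hd p \<in> V" "distinct p"
        using st by (auto simp: updown_shortest_def gpath_iff_walk)
      then show "p \<in> {p. set p \<subseteq> V \<and> distinct p}" using walk_ES_in_V by blast
    qed
  qed (rule finite_subset_distinct [OF finite_V])
  have reverse: "rev q \<in> updown_shortest t s" if "q \<in> updown_shortest s t" for q s t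
    using that by (auto simp: updown_shortest_def gpath_rev hd_rev last_rev updown_rev plen_rev
        dist_sym)
  let ?W = "rank_weight rk ` updown_shortest s t"
  have "Max ?W \<in> ?W" using finite updown_shortest_exists [OF st] by (intro Max_in) auto
  then obtain p where p: "p \<in> updown_shortest s t" and weight: "rank_weight rk p = Max ?W"
    by auto
  have maximal: "\<forall>q\<in>updown_shortest s t. rank_weight rk q \<le> rank_weight rk p"
    using weight finite by simp
  have maximal_rev: "\<forall>q\<in>updown_shortest t s. rank_weight rk q \<le> rank_weight rk (rev p)"
  proof
    fix q assume "q \<in> updown_shortest t s"
    then have "rank_weight rk (rev q) \<le> rank_weight rk p" using maximal reverse by blast
    then show "rank_weight rk q \<le> rank_weight rk (rev p)" by (simp add: rank_weight_def)
  qed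
  have "{p ! i, p ! (i + 1)} \<notin> Rset V E w \<pi>" if i: "i + 1 < length p" for i
  proof
    assume "{p ! i, p ! (i + 1)} \<in> Rset V E w \<pi>"
    then obtain a b z where ab: "{p ! i, p ! (i + 1)} = {a, b}" "rk a < rk b"
      and z: "z \<noteq> b" "rk a < rk z" "{a, z} \<in> ES" "{z, b} \<in> ES" "M {a, b} = M {a, z} + M {z, b}"
      unfolding Rset_def by blast
    from ab(1) consider "p ! i = a" "p ! (i + 1) = b" | "p ! i = b" "p ! (i + 1) = a"
      by (auto simp: doubleton_eq_iff)
    then show False
    proof cases
      case 1
      then show False using maximal_no_rising_bypass [OF st p maximal i, of z] ab z by simp
    next
      case 2
      define i' where "i' = length p - Suc (Suc i)"
      have i': "i' + 1 < length (rev p)" "rev p ! i' = a" "rev p ! (i' + 1) = b"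
        using i 2 by (auto simp: i'_def rev_nth Suc_diff_Suc)
      show False
        using maximal_no_rising_bypass [OF st(2,1) reverse [OF p] maximal_rev i'(1), of z] i' ab z
        by simp
    qed
  qed
  then show ?thesis using p by blast
qed

end

theorem mainTheorem9:
  fixes V :: "'a set" and E :: "'a set set" and w :: "'a set \<Rightarrow> real" and \<pi> :: "nat \<Rightarrow> 'a"
  assumes "simple_graph V E"
    and "connected_graph V E"
    and "\<forall>e\<in>E. w e > 0"
    and "bij_betw \<pi> {1..card V} V"
  shows "(\<forall>s\<in>V. \<forall>t\<in>V. \<exists>p. gpath (Estar V E \<pi>) p \<and> hd p = s \<and> last p = t \<and>
            updown (rank V \<pi>) p \<and>
            (\<forall>i. i + 1 < length p \<longrightarrow> {p ! i, p ! (i + 1)} \<notin> Rset V E w \<pi>) \<and>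
            plen (mP E w) p = distI E w s t)
       \<and> (\<forall>x y. {x, y} \<in> Estar V E \<pi> \<and> {x, y} \<notin> Rset V E w \<pi> \<longrightarrow>
            (\<forall>p. gpath (Estar V E \<pi>) p \<and> hd p = x \<and> last p = y \<and> updown (rank V \<pi>) p \<and>
                 plen (mP E w) p = distI E w x y \<longrightarrow> p = [x, y]))"
proof -
  interpret contraction_hierarchy V E w \<pi>
    using assms by unfold_locales
  show ?thesis
  proof (intro conjI ballI allI impI)
    fix s t assume "s \<in> V" "t \<in> V"
    then obtain p where "p \<in> updown_shortest s t"
      "\<forall>i. i + 1 < length p \<longrightarrow> {p ! i, p ! (i + 1)} \<notin> Rset V E w \<pi>"
      using bypass_free_updown_shortest by blast
    then show "\<exists>p. gpath ES p \<and> hd p = s \<and> last p = t \<and> updown rk p \<and>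
        (\<forall>i. i + 1 < length p \<longrightarrow> {p ! i, p ! (i + 1)} \<notin> Rset V E w \<pi>) \<and> plen M p = d s t"
      by (intro exI [of _ p]) (simp add: updown_shortest_def)
  next
    fix x y p
    assume "{x, y} \<in> ES \<and> {x, y} \<notin> Rset V E w \<pi>"
      and "gpath ES p \<and> hd p = x \<and> last p = y \<and> updown rk p \<and> plen M p = d x y"
    then show "p = [x, y]" using unbypassed_edge_unique by (auto simp: updown_shortest_def)
  qed
qed

end
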